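(* Let $(\Omega,+)$ be a group and $x,a,y,b,z$ subgroups of $\Omega$. Then: (1) $\Gamma(x,a,x,b,z)=\big((x\wedge a)+z\big)\wedge(x+b)=(x\wedge a)+\big(z\wedge(x+b)\big)$; (2) $\Gamma(x,a,y,b,a)=\Big(\big(x\wedge(a+y)\big)+b\Big)\wedge a=\Big(x+\big((y+a)\wedge b\big)\Big)\wedge a$; (3) $\Gamma(x,a,y,b,b)=\Big(\big(a+(y\wedge b)\big)\wedge x\Big)+b=\Big(a\wedge\big(x+(y\wedge b)\big)\Big)+b$. In particular, for all subgroups $x,a,y,b$: $\Gamma(x,a,x,b,x)=x$, $\Gamma(a,a,y,b,b)=a+b$ and $\Gamma(b,a,y,b,a)=a\wedge b$.
   Context: $(\Omega,+)$ is a group written additively but not necessarily abelian. For subsets $u,v$: $u\wedge v:=u\cap v$ and $u+v:=\{\mu+\nu:\mu\in u,\nu\in v\}$. $\Gamma(x,a,y,b,z)=\{\omega\in\Omega:\exists\alpha\in a,\beta\in b:\ \alpha+\omega+\beta\in y,\ \alpha+\omega\in z,\ \omega+\beta\in x\}$. *)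

theory Defs
  imports Main "HOL-Library.Set_Algebras"
begin

text \<open>Subgroups of an additively written (not necessarily abelian) group.
  Set sums u + v are the pointwise sums from HOL-Library.Set_Algebras.\<close>

definition add_subgroup :: "'a::group_add set \<Rightarrow> bool" where
  "add_subgroup H \<longleftrightarrow> 0 \<in> H \<and> (\<forall>u\<in>H. \<forall>v\<in>H. u + v \<in> H) \<and> (\<forall>u\<in>H. - u \<in> H)"

definition Gamma :: "'a::group_add set \<Rightarrow> 'a set \<Rightarrow> 'a set \<Rightarrow> 'a set \<Rightarrow> 'a set \<Rightarrow> 'a set" where
  "Gamma x a y b z = {\<omega>. \<exists>\<alpha>\<in>a. \<exists>\<beta>\<in>b. \<alpha> + \<omega> + \<beta> \<in> y \<and> \<alpha> + \<omega> \<in> z \<and> \<omega> + \<beta> \<in> x}"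

end

theory Submission
  imports Defs
begin

text \<open>In each of the three cases one of the constraints defining \<open>\<Gamma>\<close> is insensitive to one of
  the two shifts: for instance, if \<open>\<omega> + \<beta> \<in> x\<close>, then \<open>\<alpha> + \<omega> + \<beta> \<in> x\<close> holds iff \<open>\<alpha> \<in> x\<close>.
  The existential quantifiers over \<open>\<alpha>\<close> and \<open>\<beta>\<close> then decouple, and each one expresses
  membership in a sum with a subgroup, since \<open>\<omega> \<in> A + V\<close> iff \<open>\<alpha> + \<omega> \<in> V\<close> for some \<open>\<alpha> \<in> A\<close>.
  The alternative descriptions are instances of Dedekind's modular law and of moving an
  element of a subgroup \<open>C \<subseteq> B\<close> from one summand to the next.\<close>

lemma add_subgroup_0: "add_subgroup H \<Longrightarrow> 0 \<in> H"
  and add_subgroup_add: "add_subgroup H \<Longrightarrow> p \<in> H \<Longrightarrow> q \<in> H \<Longrightarrow> p + q \<in> H"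
  and add_subgroup_uminus: "add_subgroup H \<Longrightarrow> p \<in> H \<Longrightarrow> - p \<in> H"
  by (auto simp: add_subgroup_def)

lemma add_subgroup_Int: "add_subgroup G \<Longrightarrow> add_subgroup H \<Longrightarrow> add_subgroup (G \<inter> H)"
  by (auto simp: add_subgroup_def)

lemma add_subgroup_add_left_iff:
  assumes "add_subgroup H" "p \<in> H" shows "p + w \<in> H \<longleftrightarrow> w \<in> H"
proof
  assume "p + w \<in> H"
  with assms have "- p + (p + w) \<in> H" by (blast intro: add_subgroup_add add_subgroup_uminus)
  then show "w \<in> H" by simp
qed (rule add_subgroup_add[OF assms])

lemma add_subgroup_add_right_iff:
  assumes "add_subgroup H" "p \<in> H" shows "w + p \<in> H \<longleftrightarrow> w \<in> H"
proof
  assume "w + p \<in> H"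
  with assms have "(w + p) + - p \<in> H" by (blast intro: add_subgroup_add add_subgroup_uminus)
  then show "w \<in> H" by simp
qed (rule add_subgroup_add[OF assms(1) _ assms(2)])

lemma mem_subgroup_plus_iff:
  assumes "add_subgroup A" shows "w \<in> A + V \<longleftrightarrow> (\<exists>\<alpha>\<in>A. \<alpha> + w \<in> V)"
proof
  assume "w \<in> A + V"
  then obtain p v where "p \<in> A" "v \<in> V" "w = p + v" by (auto elim: set_plus_elim)
  then have "- p \<in> A" "- p + w \<in> V" by (simp_all add: add_subgroup_uminus[OF assms])
  then show "\<exists>\<alpha>\<in>A. \<alpha> + w \<in> V" ..
next
  assume "\<exists>\<alpha>\<in>A. \<alpha> + w \<in> V"
  then obtain \<alpha> where "\<alpha> \<in> A" "\<alpha> + w \<in> V" by blast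
  then have "- \<alpha> + (\<alpha> + w) \<in> A + V" by (intro set_plus_intro add_subgroup_uminus[OF assms])
  then show "w \<in> A + V" by simp
qed

lemma mem_plus_subgroup_iff:
  assumes "add_subgroup B" shows "w \<in> V + B \<longleftrightarrow> (\<exists>\<beta>\<in>B. w + \<beta> \<in> V)"
proof
  assume "w \<in> V + B"
  then obtain v q where "v \<in> V" "q \<in> B" "w = v + q" by (auto elim: set_plus_elim)
  then have "- q \<in> B" "w + - q \<in> V" by (simp_all add: add_subgroup_uminus[OF assms] add.assoc)
  then show "\<exists>\<beta>\<in>B. w + \<beta> \<in> V" ..
next
  assume "\<exists>\<beta>\<in>B. w + \<beta> \<in> V"
  then obtain \<beta> where "\<beta> \<in> B" "w + \<beta> \<in> V" by blast
  then have "(w + \<beta>) + - \<beta> \<in> V + B" by (intro set_plus_intro add_subgroup_uminus[OF assms])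
  then show "w \<in> V + B" by simp
qed

lemma mem_plus_iff_right:
  fixes w :: "'a::group_add"
  shows "w \<in> V + U \<longleftrightarrow> (\<exists>u\<in>U. w + - u \<in> V)"
proof
  assume "w \<in> V + U"
  then obtain v u where "w = v + u" "v \<in> V" "u \<in> U" by (rule set_plus_elim)
  moreover from \<open>w = v + u\<close> have "w + - u = v" by simp
  ultimately show "\<exists>u\<in>U. w + - u \<in> V" by (auto intro!: bexI[of _ u])
next
  assume "\<exists>u\<in>U. w + - u \<in> V"
  then obtain u where "u \<in> U" "w + - u \<in> V" by blast
  then have "(w + - u) + u \<in> V + U" by (intro set_plus_intro)
  then show "w \<in> V + U" by simp
qed

lemma set_plus_add_left_iff:
  assumes "add_subgroup A" "p \<in> A" shows "p + w \<in> A + V \<longleftrightarrow> w \<in> A + V"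
proof -
  have "(\<exists>\<alpha>\<in>A. \<alpha> + (p + w) \<in> V) \<longleftrightarrow> (\<exists>\<alpha>\<in>A. \<alpha> + w \<in> V)"
  proof
    assume "\<exists>\<alpha>\<in>A. \<alpha> + (p + w) \<in> V"
    then obtain \<alpha> where "\<alpha> \<in> A" "(\<alpha> + p) + w \<in> V" by (auto simp: add.assoc)
    then show "\<exists>\<alpha>\<in>A. \<alpha> + w \<in> V" using assms add_subgroup_add by blast
  next
    assume "\<exists>\<alpha>\<in>A. \<alpha> + w \<in> V"
    then obtain \<alpha> where "\<alpha> \<in> A" "\<alpha> + w \<in> V" by blast
    moreover have "(\<alpha> + - p) + (p + w) = \<alpha> + w" by (metis add.assoc minus_add_cancel)
    ultimately show "\<exists>\<alpha>\<in>A. \<alpha> + (p + w) \<in> V"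
      using assms add_subgroup_add add_subgroup_uminus by metis
  qed
  then show ?thesis by (simp only: mem_subgroup_plus_iff[OF assms(1)])
qed

lemma uminus_mem_set_plus_iff:
  assumes "add_subgroup A" "add_subgroup B" shows "- w \<in> A + B \<longleftrightarrow> w \<in> B + A"
proof
  assume "- w \<in> A + B"
  then obtain p q where "p \<in> A" "q \<in> B" "- w = p + q" by (auto elim: set_plus_elim)
  moreover from \<open>- w = p + q\<close> have "w = - q + - p" by (metis minus_add minus_minus)
  ultimately show "w \<in> B + A"
    using assms by (blast intro: add_subgroup_uminus set_plus_intro)
next
  assume "w \<in> B + A"
  then obtain q p where "q \<in> B" "p \<in> A" "w = q + p" by (auto elim: set_plus_elim)
  then have "- w = - p + - q" by (simp add: minus_add)
  then show "- w \<in> A + B"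
    using set_plus_intro[OF add_subgroup_uminus[OF assms(1) \<open>p \<in> A\<close>]
        add_subgroup_uminus[OF assms(2) \<open>q \<in> B\<close>]] by simp
qed

lemma subset_plus_left_if_zero_mem:
  fixes A B :: "'a::monoid_add set"
  assumes "0 \<in> A" shows "B \<subseteq> A + B"
proof
  fix v assume "v \<in> B"
  with assms have "0 + v \<in> A + B" by (rule set_plus_intro)
  then show "v \<in> A + B" by simp
qed

lemma subset_plus_right_if_zero_mem:
  fixes A B :: "'a::monoid_add set"
  assumes "0 \<in> B" shows "A \<subseteq> A + B"
proof
  fix v assume "v \<in> A"
  from this assms have "v + 0 \<in> A + B" by (rule set_plus_intro)
  then show "v \<in> A + B" by simp
qed

lemma set_plus_subgroup_absorb_left:
  assumes "add_subgroup H" "0 \<in> U" "U \<subseteq> H" shows "U + H = H"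
proof
  show "U + H \<subseteq> H"
  proof
    fix w assume "w \<in> U + H"
    then obtain u h where "w = u + h" "u \<in> U" "h \<in> H" by (rule set_plus_elim)
    with assms show "w \<in> H" by (simp add: add_subgroup_add subsetD)
  qed
qed (rule subset_plus_left_if_zero_mem[OF assms(2)])

lemma set_plus_Int_modular:
  assumes "add_subgroup A" "A + V \<subseteq> V"
  shows "(A + Z) \<inter> V = A + (Z \<inter> V)"
proof -
  have "\<alpha> + w \<in> V \<longleftrightarrow> w \<in> V" if "\<alpha> \<in> A" for \<alpha> w
  proof
    assume "\<alpha> + w \<in> V"
    with assms(2) have "- \<alpha> + (\<alpha> + w) \<in> V"
      using set_plus_intro[OF add_subgroup_uminus[OF assms(1) that]] by blast
    then show "w \<in> V" by simp
  next
    assume "w \<in> V"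
    with assms(2) show "\<alpha> + w \<in> V" using set_plus_intro[OF that] by blast
  qed
  then show ?thesis
    unfolding set_eq_iff Int_iff mem_subgroup_plus_iff[OF assms(1)] by blast
qed

lemma plus_Int_plus_subset:
  assumes "add_subgroup B" "add_subgroup C" "C \<subseteq> B"
  shows "((A + C) \<inter> X) + B \<subseteq> (A \<inter> (X + C)) + B"
proof
  fix w assume "w \<in> ((A + C) \<inter> X) + B"
  then obtain u \<beta> where "w = u + \<beta>" "u \<in> A + C" "u \<in> X" "\<beta> \<in> B"
    by (auto elim: set_plus_elim)
  then obtain p q where "u = p + q" "p \<in> A" "q \<in> C" by (auto elim: set_plus_elim)
  have "u + - q \<in> X + C"
    using set_plus_intro[OF \<open>u \<in> X\<close> add_subgroup_uminus[OF assms(2) \<open>q \<in> C\<close>]] .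
  then have "p \<in> A \<inter> (X + C)" using \<open>u = p + q\<close> \<open>p \<in> A\<close> by (simp add: add.assoc)
  moreover have "q + \<beta> \<in> B" using assms \<open>q \<in> C\<close> \<open>\<beta> \<in> B\<close> by (blast intro: add_subgroup_add)
  ultimately have "p + (q + \<beta>) \<in> (A \<inter> (X + C)) + B" by (rule set_plus_intro)
  then show "w \<in> (A \<inter> (X + C)) + B" using \<open>w = u + \<beta>\<close> \<open>u = p + q\<close> by (simp add: add.assoc)
qed

lemma plus_Int_plus_eq:
  assumes "add_subgroup B" "add_subgroup C" "C \<subseteq> B"
  shows "((A + C) \<inter> X) + B = (A \<inter> (X + C)) + B"
  using plus_Int_plus_subset[OF assms, of A X] plus_Int_plus_subset[OF assms, of X A]
  by (simp add: Int_commute)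

lemma Gamma_x_a_x_b_z:
  assumes "add_subgroup x" "add_subgroup a" "add_subgroup b"
  shows "Gamma x a x b z = ((x \<inter> a) + z) \<inter> (x + b)"
proof -
  have "\<omega> \<in> Gamma x a x b z \<longleftrightarrow> (\<exists>\<alpha>\<in>x \<inter> a. \<alpha> + \<omega> \<in> z) \<and> (\<exists>\<beta>\<in>b. \<omega> + \<beta> \<in> x)" for \<omega>
    using add_subgroup_add_right_iff[OF assms(1)] unfolding Gamma_def
    by (auto simp: add.assoc)
  then show ?thesis
    unfolding set_eq_iff Int_iff mem_subgroup_plus_iff[OF add_subgroup_Int[OF assms(1,2)]]
      mem_plus_subgroup_iff[OF assms(3)]
    by blast
qed

lemma Gamma_x_a_y_b_a:
  assumes "add_subgroup a" "add_subgroup b"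
  shows "Gamma x a y b a = ((x \<inter> (a + y)) + b) \<inter> a"
proof -
  have "\<omega> \<in> Gamma x a y b a \<longleftrightarrow> \<omega> \<in> a \<and> (\<exists>\<beta>\<in>b. \<omega> + \<beta> \<in> x \<and> (\<exists>\<alpha>\<in>a. \<alpha> + (\<omega> + \<beta>) \<in> y))" for \<omega>
    using add_subgroup_add_left_iff[OF assms(1)] unfolding Gamma_def
    by (auto simp: add.assoc)
  then show ?thesis
    unfolding set_eq_iff Int_iff mem_plus_subgroup_iff[OF assms(2)] mem_subgroup_plus_iff[OF assms(1)]
    by blast
qed

lemma Gamma_x_a_y_b_b:
  assumes "add_subgroup a" "add_subgroup b"
  shows "Gamma x a y b b = ((a + (y \<inter> b)) \<inter> x) + b"
proof -
  have "\<omega> \<in> Gamma x a y b b \<longleftrightarrow> (\<exists>\<beta>\<in>b. \<omega> + \<beta> \<in> x \<and> (\<exists>\<alpha>\<in>a. \<alpha> + (\<omega> + \<beta>) \<in> y \<inter> b))" for \<omega>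
    using add_subgroup_add_right_iff[OF assms(2), where w="_ + \<omega>"] unfolding Gamma_def
    by (auto simp: add.assoc[symmetric])
  then show ?thesis
    unfolding set_eq_iff Int_iff mem_plus_subgroup_iff[OF assms(2)] mem_subgroup_plus_iff[OF assms(1)]
    by blast
qed

lemma Int_plus_Int_eq:
  assumes "add_subgroup a" "add_subgroup y" "add_subgroup b"
  shows "((x \<inter> (a + y)) + b) \<inter> a = (x + ((y + a) \<inter> b)) \<inter> a"
proof -
  have "w \<in> (x \<inter> (a + y)) + b \<longleftrightarrow> w \<in> x + ((y + a) \<inter> b)" if "w \<in> a" for w
  proof -
    have "w + \<beta> \<in> a + y \<longleftrightarrow> - \<beta> \<in> y + a" for \<beta>
      by (simp only: set_plus_add_left_iff[OF assms(1) that] uminus_mem_set_plus_iff[OF assms(2,1)])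
    then have "w \<in> (x \<inter> (a + y)) + b \<longleftrightarrow> (\<exists>\<beta>\<in>b. w + \<beta> \<in> x \<and> - \<beta> \<in> y + a)"
      by (simp add: mem_plus_subgroup_iff[OF assms(3)])
    also have "\<dots> \<longleftrightarrow> (\<exists>s\<in>(y + a) \<inter> b. w + - s \<in> x)"
    proof
      assume "\<exists>\<beta>\<in>b. w + \<beta> \<in> x \<and> - \<beta> \<in> y + a"
      then obtain \<beta> where "\<beta> \<in> b" "w + \<beta> \<in> x" "- \<beta> \<in> y + a" by blast
      then show "\<exists>s\<in>(y + a) \<inter> b. w + - s \<in> x"
        by (intro bexI[of _ "- \<beta>"]) (simp_all add: add_subgroup_uminus[OF assms(3)])
    next
      assume "\<exists>s\<in>(y + a) \<inter> b. w + - s \<in> x"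
      then obtain s where "s \<in> b" "w + - s \<in> x" "s \<in> y + a" by blast
      then show "\<exists>\<beta>\<in>b. w + \<beta> \<in> x \<and> - \<beta> \<in> y + a"
        by (intro bexI[of _ "- s"]) (simp_all add: add_subgroup_uminus[OF assms(3)])
    qed
    finally show ?thesis by (simp only: mem_plus_iff_right)
  qed
  then show ?thesis by blast
qed

lemma Int_plus_Int_plus_modular:
  assumes "add_subgroup x" "add_subgroup a"
  shows "((x \<inter> a) + z) \<inter> (x + b) = (x \<inter> a) + (z \<inter> (x + b))"
proof (rule set_plus_Int_modular[OF add_subgroup_Int[OF assms]])
  have "(x \<inter> a) + (x + b) \<subseteq> x + (x + b)"
    by (rule set_plus_mono2) auto
  also have "\<dots> = (x + x) + b"
    by (rule add.assoc[symmetric])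
  also have "x + x = x"
    by (rule set_plus_subgroup_absorb_left[OF assms(1) add_subgroup_0[OF assms(1)] order_refl])
  finally show "(x \<inter> a) + (x + b) \<subseteq> x + b" .
qed

lemma Gamma_x_a_x_b_x:
  assumes "add_subgroup x" "add_subgroup a" "add_subgroup b"
  shows "Gamma x a x b x = x"
proof -
  have "(x \<inter> a) + x = x"
    using assms by (simp add: set_plus_subgroup_absorb_left add_subgroup_0)
  moreover have "x \<subseteq> x + b"
    by (rule subset_plus_right_if_zero_mem[OF add_subgroup_0[OF assms(3)]])
  ultimately show ?thesis
    by (simp add: Gamma_x_a_x_b_z[OF assms] Int_absorb2)
qed

lemma Gamma_a_a_y_b_b:
  assumes "add_subgroup a" "add_subgroup y" "add_subgroup b"
  shows "Gamma a a y b b = a + b"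
proof -
  have "a \<subseteq> a + (y \<inter> b)"
    using assms by (simp add: subset_plus_right_if_zero_mem add_subgroup_0)
  then show ?thesis
    by (simp add: Gamma_x_a_y_b_b[OF assms(1,3)] Int_absorb1)
qed

lemma Gamma_b_a_y_b_a:
  assumes "add_subgroup a" "add_subgroup y" "add_subgroup b"
  shows "Gamma b a y b a = a \<inter> b"
proof -
  have "0 \<in> a + y"
    using set_plus_intro[OF add_subgroup_0[OF assms(1)] add_subgroup_0[OF assms(2)]] by simp
  then have "(b \<inter> (a + y)) + b = b"
    using assms(3) by (simp add: set_plus_subgroup_absorb_left add_subgroup_0)
  then show ?thesis
    by (simp add: Gamma_x_a_y_b_a[OF assms(1,3)] Int_commute)
qed

theorem theorem10p1:
  fixes x a y b z :: "'g::group_add set"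
  assumes "add_subgroup x" and "add_subgroup a" and "add_subgroup y"
    and "add_subgroup b" and "add_subgroup z"
  shows "Gamma x a x b z = ((x \<inter> a) + z) \<inter> (x + b)
      \<and> ((x \<inter> a) + z) \<inter> (x + b) = (x \<inter> a) + (z \<inter> (x + b))
    \<and> Gamma x a y b a = ((x \<inter> (a + y)) + b) \<inter> a
      \<and> ((x \<inter> (a + y)) + b) \<inter> a = (x + ((y + a) \<inter> b)) \<inter> a
    \<and> Gamma x a y b b = ((a + (y \<inter> b)) \<inter> x) + b
      \<and> ((a + (y \<inter> b)) \<inter> x) + b = (a \<inter> (x + (y \<inter> b))) + b
    \<and> Gamma x a x b x = x
    \<and> Gamma a a y b b = a + b
    \<and> Gamma b a y b a = a \<inter> b"
  by (intro conjI Gamma_x_a_x_b_z Int_plus_Int_plus_modular Gamma_x_a_y_b_a Int_plus_Int_eq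
      Gamma_x_a_y_b_b plus_Int_plus_eq Gamma_x_a_x_b_x Gamma_a_a_y_b_b Gamma_b_a_y_b_a
      add_subgroup_Int Int_lower2 assms)

end
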